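(* Let $m>1$, $\chi>0$, $N\ge 2$, and assume $\chi<C_N$. Let $X_0\in\mathcal R^N$ and let $X$ be the maximal solution in $\mathcal R^N$ of the gradient flow system with $X(0)=X_0$. Then the maximal time of existence of $X$ is $T=+\infty$.
   Context: $\mathcal R^p=\{X\in\mathbb R^p: X_1<X_2<\dots<X_p,\ \sum_{i=1}^pX_i=0\}$. For an integer $p\ge 2$, the constant $C_p>0$ is defined by $$\frac1{C_p}=\max_{X\in\mathcal R^p}\frac{\sum_{1\le i\ne j\le p}|X_j-X_i|^{1-m}}{\sum_{i=1}^{p-1}(X_{i+1}-X_i)^{1-m}}.$$ The gradient flow system is the ODE system, for $i=1,\dots,N$, $$\dot X_i=-(X_{i+1}-X_i)^{-m}+(X_i-X_{i-1})^{-m}+2\chi\sum_{j\ne i}\mathrm{sign}(j-i)\,|X_j-X_i|^{-m},$$ with the convention that the term $-(X_{i+1}-X_i)^{-m}$ is absent for $i=N$ and the term $(X_i-X_{i-1})^{-m}$ is absent for $i=1$. It is the Euclidean gradient flow $\dot X=-\nabla\mathcal F^N_m(X)$ of $\mathcal F^N_m(X)=\frac1{m-1}\sum_{i=1}^{N-1}(X_{i+1}-X_i)^{1-m}-\frac{\chi}{m-1}\sum_{1\le i\ne j\le N}|X_i-X_j|^{1-m}$. *)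

theory Defs
  imports "HOL-Analysis.Analysis" "HOL-Library.Extended_Real"
begin

text \<open>Configurations are functions nat => real, only indices 1..p matter.\<close>

definition ordered_conf :: "nat \<Rightarrow> (nat \<Rightarrow> real) set" where
  "ordered_conf p = {X. (\<forall>i\<in>{1..<p}. X i < X (Suc i)) \<and> (\<Sum>i=1..p. X i) = 0}"

definition ratio_C :: "real \<Rightarrow> nat \<Rightarrow> (nat \<Rightarrow> real) \<Rightarrow> real" where
  "ratio_C m p X =
     (\<Sum>i\<in>{1..p}. \<Sum>j\<in>{1..p} - {i}. \<bar>X j - X i\<bar> powr (1 - m))
     / (\<Sum>i\<in>{1..<p}. (X (Suc i) - X i) powr (1 - m))"

definition C_const :: "real \<Rightarrow> nat \<Rightarrow> real" where
  "C_const m p = 1 / (SUP X\<in>ordered_conf p. ratio_C m p X)"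

definition flow_field :: "real \<Rightarrow> real \<Rightarrow> nat \<Rightarrow> (nat \<Rightarrow> real) \<Rightarrow> nat \<Rightarrow> real" where
  "flow_field m chi N X i =
     (if i < N then - ((X (Suc i) - X i) powr (- m)) else 0)
   + (if 1 < i then (X i - X (i - 1)) powr (- m) else 0)
   + 2 * chi * (\<Sum>j\<in>{1..N} - {i}. sgn (real j - real i) * \<bar>X j - X i\<bar> powr (- m))"

definition flow_solution ::
  "real \<Rightarrow> real \<Rightarrow> nat \<Rightarrow> (nat \<Rightarrow> real) \<Rightarrow> ereal \<Rightarrow> (real \<Rightarrow> nat \<Rightarrow> real) \<Rightarrow> bool" where
  "flow_solution m chi N X0 T X \<longleftrightarrow>
     0 < T \<and>
     (\<forall>i\<in>{1..N}. X 0 i = X0 i) \<and>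
     (\<forall>t. 0 \<le> t \<and> ereal t < T \<longrightarrow>
        X t \<in> ordered_conf N \<and>
        (\<forall>i\<in>{1..N}. ((\<lambda>s. X s i) has_real_derivative flow_field m chi N (X t) i)
                        (at t within {s. 0 \<le> s \<and> ereal s < T})))"

definition maximal_flow_solution ::
  "real \<Rightarrow> real \<Rightarrow> nat \<Rightarrow> (nat \<Rightarrow> real) \<Rightarrow> ereal \<Rightarrow> (real \<Rightarrow> nat \<Rightarrow> real) \<Rightarrow> bool" where
  "maximal_flow_solution m chi N X0 T X \<longleftrightarrow>
     flow_solution m chi N X0 T X \<and>
     \<not> (\<exists>T' Y. T < T' \<and> flow_solution m chi N X0 T' Y \<and>
          (\<forall>t. 0 \<le> t \<and> ereal t < T \<longrightarrow> (\<forall>i\<in>{1..N}. Y t i = X t i)))"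

end

theory Submission
  imports Defs
begin

text \<open>The energy gap_sum - chi * pair_sum is nonincreasing along the flow, and chi < C_N makes it
  coercive: it dominates (1 - chi / C_N) * gap_sum.  Hence all gaps X_(i+1) - X_i stay above a fixed
  \<delta> > 0 as long as the solution exists.  While that holds, the flow coincides with the flow of the
  field whose interactions are truncated at distance \<delta>/2; this field is globally Lipschitz, so by
  Picard's theorem its flow exists on intervals of a length h depending only on \<delta>.  Restarting it
  within h/2 of a finite maximal time would extend the solution, contradicting maximality.\<close>

section \<open>Finite Lipschitz systems\<close>

instance bcontfun :: (metric_space, banach) banach ..

lemma picard_local_existence:
  fixes G :: "'a::banach \<Rightarrow> 'a"
  assumes lip: "\<And>x y. norm (G x - G y) \<le> L * norm (x - y)" and L0: "0 \<le> L"
    and h0: "0 < h" and Lh: "L * h < 1"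
  shows "\<exists>y. y t0 = z \<and>
    (\<forall>t\<in>{t0..t0+h}. (y has_vector_derivative G (y t)) (at t within {t0..t0+h}))"
proof -
  define cl where "cl t = max t0 (min (t0+h) t)" for t
  have clI: "cl t \<in> {t0..t0+h}" for t using h0 by (auto simp: cl_def)
  have cl_id: "t \<in> {t0..t0+h} \<Longrightarrow> cl t = t" for t by (auto simp: cl_def)
  have "L-lipschitz_on UNIV G"
    by (rule lipschitz_onI) (use lip L0 in \<open>auto simp: dist_norm\<close>)
  then have Gcont: "continuous_on UNIV G" by (rule lipschitz_on_continuous_on)
  have Gy_cont: "continuous_on S (\<lambda>s. G (y s))" for y :: "real \<Rightarrow>\<^sub>C 'a" and S
    by (rule continuous_on_compose2[OF Gcont continuous_on_apply_bcontfun]) auto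
  have Gy_int: "(\<lambda>s. G (y s)) integrable_on {a..b}" for y :: "real \<Rightarrow>\<^sub>C 'a" and a b
    by (rule integrable_continuous_interval[OF Gy_cont])
  have Gbound: "norm (G (y s)) \<le> norm (G 0) + L * norm y" for y :: "real \<Rightarrow>\<^sub>C 'a" and s
    using norm_triangle_sub[of "G (y s)" "G 0"] lip[of "y s" 0] norm_bounded[of y s] L0
    by (smt (verit, best) diff_zero mult_left_mono)
  \<comment> \<open>Picard operator, frozen outside [t0, t0+h] so that it maps bounded continuous functions to themselves\<close>
  define Pf where "Pf y t = z + integral {t0..cl t} (\<lambda>s. G (y s))" for y :: "real \<Rightarrow>\<^sub>C 'a" and t
  have Pf_in: "Pf y \<in> bcontfun" for y
  proof (rule bcontfun_normI)
    have "continuous_on {t0..t0+h} (\<lambda>u. integral {t0..u} (\<lambda>s. G (y s)))"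
      by (rule indefinite_integral_continuous_1[OF Gy_int])
    then have "continuous_on UNIV (\<lambda>t. integral {t0..cl t} (\<lambda>s. G (y s)))"
      by (rule continuous_on_compose2) (use clI in \<open>auto simp: cl_def intro!: continuous_intros\<close>)
    then show "continuous_on UNIV (Pf y)" unfolding Pf_def by (intro continuous_intros)
    fix t
    have "norm (integral {t0..cl t} (\<lambda>s. G (y s))) \<le> (norm (G 0) + L * norm y) * (cl t - t0)"
      by (rule integral_bound) (use clI[of t] Gy_cont Gbound in auto)
    also have "\<dots> \<le> (norm (G 0) + L * norm y) * h"
      using clI[of t] L0 by (intro mult_left_mono) auto
    finally show "norm (Pf y t) \<le> norm z + (norm (G 0) + L * norm y) * h"
      unfolding Pf_def by (smt (verit) norm_triangle_ineq)
  qed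
  define P where "P y = Bcontfun (Pf y)" for y
  have Papp: "apply_bcontfun (P y) = Pf y" for y
    unfolding P_def using Pf_in by (simp add: Bcontfun_inverse)
  have contraction: "dist (P y1) (P y2) \<le> (L * h) * dist y1 y2" for y1 y2
  proof (rule dist_bound)
    fix t
    have "dist (P y1 t) (P y2 t) = norm (integral {t0..cl t} (\<lambda>s. G (y1 s) - G (y2 s)))"
      unfolding Papp Pf_def dist_norm by (simp add: integral_diff[OF Gy_int Gy_int])
    also have "\<dots> \<le> (L * dist y1 y2) * (cl t - t0)"
    proof (rule integral_bound)
      fix s
      show "norm (G (y1 s) - G (y2 s)) \<le> L * dist y1 y2"
        using lip[of "y1 s" "y2 s"] dist_bounded[of y1 s y2] L0
        by (smt (verit) dist_norm mult_left_mono)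
    qed (use clI[of t] in \<open>auto intro!: continuous_intros Gy_cont\<close>)
    also have "\<dots> \<le> (L * dist y1 y2) * h" using clI[of t] L0 by (intro mult_left_mono) auto
    finally show "dist (P y1 t) (P y2 t) \<le> L * h * dist y1 y2" by (simp add: mult_ac)
  qed
  obtain y where "P y = y" using banach_fix_type[of "L * h" P] contraction L0 h0 Lh by auto
  then have y_eq: "y t = z + integral {t0..t} (\<lambda>s. G (y s))" if "t \<in> {t0..t0+h}" for t
    using Papp[of y] that cl_id unfolding Pf_def by metis
  show ?thesis
  proof (intro exI[of _ "apply_bcontfun y"] conjI ballI)
    show "y t0 = z" using y_eq[of t0] h0 by simp
    fix t assume t: "t \<in> {t0..t0+h}"
    have "((\<lambda>u. z + integral {t0..u} (\<lambda>s. G (y s))) has_vector_derivative G (y t))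
        (at t within {t0..t0+h})"
      using integral_has_vector_derivative[OF Gy_cont t] by (intro derivative_eq_intros) auto
    then show "(y has_vector_derivative G (y t)) (at t within {t0..t0+h})"
      by (rule has_vector_derivative_transform[OF t, rotated]) (simp add: y_eq)
  qed
qed

definition hat :: "real \<Rightarrow> real" where
  "hat s = max 0 (1 - \<bar>s\<bar>)"

lemma hat_nonneg: "0 \<le> hat s" and hat_le_one: "hat s \<le> 1"
  unfolding hat_def by auto

lemma hat_of_int_diff: "hat (real i - real j) = (if i = j then 1 else 0)"
proof (cases "i = j")
  case False
  then have "1 \<le> \<bar>real i - real j\<bar>" by (cases "i < j") auto
  then show ?thesis using False unfolding hat_def by simp
qed (simp add: hat_def)

text \<open>Coordinates 1..N are embedded into the Banach space of bounded continuous functions on the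
  real line as the piecewise linear interpolant with nodes at the integers.\<close>

definition interpolant :: "nat \<Rightarrow> (nat \<Rightarrow> real) \<Rightarrow> (real \<Rightarrow>\<^sub>C real)" where
  "interpolant N x = Bcontfun (\<lambda>s. \<Sum>j\<in>{1..N}. x j * hat (s - real j))"

lemma apply_interpolant: "apply_bcontfun (interpolant N x) s = (\<Sum>j\<in>{1..N}. x j * hat (s - real j))"
proof -
  have "(\<lambda>s. \<Sum>j\<in>{1..N}. x j * hat (s - real j)) \<in> bcontfun"
  proof (rule bcontfun_normI)
    show "continuous_on UNIV (\<lambda>s. \<Sum>j\<in>{1..N}. x j * hat (s - real j))"
      unfolding hat_def by (intro continuous_intros)
    fix s
    have "\<bar>\<Sum>j\<in>{1..N}. x j * hat (s - real j)\<bar> \<le> (\<Sum>j\<in>{1..N}. \<bar>x j * hat (s - real j)\<bar>)"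
      by (rule sum_abs)
    also have "\<dots> \<le> (\<Sum>j\<in>{1..N}. \<bar>x j\<bar>)"
      by (intro sum_mono) (simp add: abs_mult hat_nonneg hat_le_one mult_left_le)
    finally show "norm (\<Sum>j\<in>{1..N}. x j * hat (s - real j)) \<le> (\<Sum>j\<in>{1..N}. \<bar>x j\<bar>)" by simp
  qed
  then show ?thesis unfolding interpolant_def by (simp add: Bcontfun_inverse)
qed

lemma apply_interpolant_of_nat:
  "apply_bcontfun (interpolant N x) (real i) = (if i \<in> {1..N} then x i else 0)"
  by (simp add: apply_interpolant hat_of_int_diff if_distrib sum.delta' cong: if_cong)

lemma norm_interpolant_diff_le:
  assumes "\<forall>j\<in>{1..N}. \<bar>x j - y j\<bar> \<le> D"
  shows "norm (interpolant N x - interpolant N y) \<le> real N * D"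
proof (rule norm_bound)
  fix s
  have "\<bar>\<Sum>j\<in>{1..N}. (x j - y j) * hat (s - real j)\<bar> \<le> (\<Sum>j\<in>{1..N}. \<bar>(x j - y j) * hat (s - real j)\<bar>)"
    by (rule sum_abs)
  also have "\<dots> \<le> (\<Sum>j\<in>{1..N}. D)"
  proof (rule sum_mono)
    fix j assume "j \<in> {1..N}"
    then have "\<bar>x j - y j\<bar> * hat (s - real j) \<le> D"
      using assms hat_nonneg hat_le_one by (meson abs_ge_zero mult_left_le order_trans)
    then show "\<bar>(x j - y j) * hat (s - real j)\<bar> \<le> D"
      by (simp add: abs_mult hat_nonneg)
  qed
  finally show "norm (apply_bcontfun (interpolant N x - interpolant N y) s) \<le> real N * D"
    by (simp add: apply_interpolant sum_subtractf[symmetric] left_diff_distrib)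
qed

lemma has_real_derivative_apply_bcontfun:
  fixes y :: "real \<Rightarrow> ('a::topological_space \<Rightarrow>\<^sub>C real)"
  assumes "(y has_vector_derivative v) (at t within S)"
  shows "((\<lambda>s. apply_bcontfun (y s) i) has_real_derivative apply_bcontfun v i) (at t within S)"
proof -
  have "bounded_linear (\<lambda>u::'a \<Rightarrow>\<^sub>C real. apply_bcontfun u i)"
    by (rule bounded_linear_intro[where K=1]) (simp_all, metis norm_bounded real_norm_def)
  from bounded_linear.has_vector_derivative[OF this assms] show ?thesis
    by (simp add: has_real_derivative_iff_has_vector_derivative)
qed

definition lipschitz_system :: "nat \<Rightarrow> real \<Rightarrow> ((nat \<Rightarrow> real) \<Rightarrow> nat \<Rightarrow> real) \<Rightarrow> bool" where
  "lipschitz_system N L F \<longleftrightarrow> 0 \<le> L \<and>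
     (\<forall>x y D i. i \<in> {1..N} \<longrightarrow> (\<forall>j\<in>{1..N}. \<bar>x j - y j\<bar> \<le> D) \<longrightarrow> \<bar>F x i - F y i\<bar> \<le> L * D)"

definition solves_system ::
  "nat \<Rightarrow> ((nat \<Rightarrow> real) \<Rightarrow> nat \<Rightarrow> real) \<Rightarrow> real set \<Rightarrow> (real \<Rightarrow> nat \<Rightarrow> real) \<Rightarrow> bool" where
  "solves_system N F S x \<longleftrightarrow>
     (\<forall>t\<in>S. \<forall>i\<in>{1..N}. ((\<lambda>s. x s i) has_real_derivative F (x t) i) (at t within S))"

lemma solves_system_subset:
  "solves_system N F S x \<Longrightarrow> S' \<subseteq> S \<Longrightarrow> solves_system N F S' x"
  unfolding solves_system_def by (meson DERIV_subset subsetD)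

lemma lipschitz_system_local_existence:
  assumes F: "lipschitz_system N L F" and h: "0 < h" "real N * L * h < 1"
  shows "\<exists>x. (\<forall>i\<in>{1..N}. x a i = x0 i) \<and> solves_system N F {a..a+h} x"
proof -
  define G where "G u = interpolant N (F (\<lambda>i. apply_bcontfun u (real i)))" for u
  have L0: "0 \<le> real N * L" using F by (simp add: lipschitz_system_def)
  have G_lip: "norm (G u - G v) \<le> (real N * L) * norm (u - v)" for u v
  proof -
    have "\<bar>apply_bcontfun u (real j) - apply_bcontfun v (real j)\<bar> \<le> norm (u - v)" for j
      using norm_bounded[of "u - v" "real j"] by simp
    then have "\<forall>j\<in>{1..N}. \<bar>F (\<lambda>i. u (real i)) j - F (\<lambda>i. v (real i)) j\<bar> \<le> L * norm (u - v)"
      using F unfolding lipschitz_system_def by simp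
    then show ?thesis unfolding G_def using norm_interpolant_diff_le by (simp add: mult.assoc)
  qed
  obtain y where y0: "y a = interpolant N x0"
    and y': "\<forall>t\<in>{a..a+h}. (y has_vector_derivative G (y t)) (at t within {a..a+h})"
    using picard_local_existence[of G "real N * L" h a "interpolant N x0"] G_lip L0 h by blast
  show ?thesis
  proof (intro exI[of _ "\<lambda>s i. apply_bcontfun (y s) (real i)"] conjI ballI)
    show "y a (real i) = x0 i" if "i \<in> {1..N}" for i using that by (simp add: y0 apply_interpolant_of_nat)
    show "solves_system N F {a..a+h} (\<lambda>s i. apply_bcontfun (y s) (real i))"
      unfolding solves_system_def
    proof (intro ballI)
      fix t i assume "t \<in> {a..a+h}" "i \<in> {1..N}"
      with has_real_derivative_apply_bcontfun[OF y'[rule_format], of t "real i"]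
      show "((\<lambda>s. y s (real i)) has_real_derivative F (\<lambda>i. y t (real i)) i) (at t within {a..a+h})"
        by (simp add: G_def apply_interpolant_of_nat)
    qed
  qed
qed

lemma lipschitz_system_unique:
  assumes F: "lipschitz_system N L F" and small: "real N * L * (b - a) < 1"
    and x: "solves_system N F {a..b} x" and y: "solves_system N F {a..b} y"
    and init: "\<forall>i\<in>{1..N}. x a i = y a i"
    and t: "t \<in> {a..b}" and i: "i \<in> {1..N}"
  shows "x t i = y t i"
proof -
  have L0: "0 \<le> L" using F by (simp add: lipschitz_system_def)
  define e where "e s j = x s j - y s j" for s j
  have e': "((\<lambda>s. e s j) has_real_derivative F (x s) j - F (y s) j) (at s within {a..b})"
    if "s \<in> {a..b}" "j \<in> {1..N}" for s j
    unfolding e_def using x y that unfolding solves_system_def by (intro DERIV_diff) auto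
  define d where "d s = (\<Sum>j\<in>{1..N}. \<bar>e s j\<bar>)" for s
  have "continuous_on {a..b} d"
    unfolding d_def using e' by (intro continuous_on_sum continuous_on_rabs DERIV_continuous_on) auto
  moreover have "{a..b} \<noteq> {}" using t by auto
  ultimately obtain s0 where s0: "s0 \<in> {a..b}" and dmax: "\<forall>s\<in>{a..b}. d s \<le> d s0"
    using continuous_attains_sup[OF compact_Icc] by blast
  define D where "D = d s0"
  have e_le_D: "\<bar>e s j\<bar> \<le> D" if "s \<in> {a..b}" "j \<in> {1..N}" for s j
    using member_le_sum[of j "{1..N}" "\<lambda>j. \<bar>e s j\<bar>"] dmax that unfolding D_def d_def by force
  have D0: "0 \<le> D" unfolding D_def d_def by (simp add: sum_nonneg)
  have e_small: "\<bar>e s j\<bar> \<le> L * D * (b - a)" if s: "s \<in> {a..b}" and j: "j \<in> {1..N}" for s j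
  proof -
    have "norm (e s j - e a j) \<le> L * D * norm (s - a)"
    proof (rule field_differentiable_bound[OF convex_real_interval(5) e'[OF _ j]])
      show "norm (F (x r) j - F (y r) j) \<le> L * D" if "r \<in> {a..b}" for r
        using F j e_le_D[OF that] unfolding lipschitz_system_def e_def by simp
    qed (use s in auto)
    moreover have "L * D * norm (s - a) \<le> L * D * (b - a)"
      using s L0 D0 by (intro mult_left_mono) auto
    ultimately show ?thesis using init j by (simp add: e_def)
  qed
  have "D \<le> (\<Sum>j\<in>{1..N}. L * D * (b - a))"
    unfolding D_def d_def by (rule sum_mono) (rule e_small[OF s0, unfolded D_def d_def])
  then have "D * (1 - real N * L * (b - a)) \<le> 0" by (simp add: algebra_simps)
  then have "D = 0" using D0 small by (simp add: mult_le_0_iff)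
  then show ?thesis using e_le_D[OF t i] by (simp add: e_def)
qed

section \<open>Ordered configurations and truncated interactions\<close>

lemma consecutive_le_imp_le:
  fixes x :: "nat \<Rightarrow> real"
  assumes "\<forall>k\<in>{1..<N}. x k \<le> x (Suc k)" and "1 \<le> i" "i \<le> j" "j \<le> N"
  shows "x i \<le> x j"
  by (rule lift_Suc_mono_le_ivl[where N="{1..<N}"]) (use assms in auto)

lemma consecutive_less_imp_less:
  fixes x :: "nat \<Rightarrow> real"
  assumes "\<forall>k\<in>{1..<N}. x k < x (Suc k)" and "1 \<le> i" "i < j" "j \<le> N"
  shows "x i < x j"
  by (rule lift_Suc_mono_less_ivl[where N="{1..<N}"]) (use assms in auto)

lemma consecutive_gap_imp_gap:
  fixes x :: "nat \<Rightarrow> real"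
  assumes gap: "\<forall>k\<in>{1..<N}. x k + c \<le> x (Suc k)" and "0 \<le> c" and "1 \<le> i" "i < j" "j \<le> N"
  shows "x i + c \<le> x j"
proof -
  have "x (Suc i) \<le> x j"
    by (rule consecutive_le_imp_le[of N]) (use gap assms in \<open>auto intro: add_increasing2\<close>)
  then show ?thesis using gap assms by force
qed

lemma consecutive_gap_imp_dist:
  fixes x :: "nat \<Rightarrow> real"
  assumes gap: "\<forall>k\<in>{1..<N}. x k + c \<le> x (Suc k)" and "0 \<le> c"
    and "i \<in> {1..N}" "j \<in> {1..N}" "i \<noteq> j"
  shows "c \<le> \<bar>x j - x i\<bar>"
proof (cases "i < j")
  case True
  then show ?thesis using consecutive_gap_imp_gap[OF gap, of i j] assms by auto
next
  case False
  then show ?thesis using consecutive_gap_imp_gap[OF gap, of j i] assms by auto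
qed

lemma abs_powr_neg_diff_le:
  fixes a b c m :: real
  assumes "0 < c" "0 < m" "c \<le> a" "c \<le> b"
  shows "\<bar>a powr (-m) - b powr (-m)\<bar> \<le> m * c powr (-m-1) * \<bar>a - b\<bar>"
proof -
  have "norm (a powr (-m) - b powr (-m)) \<le> m * c powr (-m-1) * norm (a - b)"
  proof (rule field_differentiable_bound[of "{c..}"])
    fix z :: real assume z: "z \<in> {c..}"
    then show "((\<lambda>u. u powr (-m)) has_field_derivative -m * z powr (-m-1)) (at z within {c..})"
      using has_real_derivative_powr[of z "-m"] assms by (auto intro: has_field_derivative_at_within)
    have "z powr (-m-1) \<le> c powr (-m-1)" by (rule powr_mono2') (use z assms in auto)
    then show "norm (-m * z powr (-m-1)) \<le> m * c powr (-m-1)" using assms by (simp add: abs_mult)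
  qed (use assms in auto)
  then show ?thesis by simp
qed

definition cutoff_power :: "real \<Rightarrow> real \<Rightarrow> real \<Rightarrow> real" where
  "cutoff_power m c d = (max d c) powr (-m)"

lemma cutoff_power_eq: "c \<le> d \<Longrightarrow> cutoff_power m c d = d powr (-m)"
  unfolding cutoff_power_def by (simp add: max_def)

lemma abs_cutoff_power_le:
  assumes "0 < c" "0 < m"
  shows "\<bar>cutoff_power m c d\<bar> \<le> c powr (-m)"
  unfolding cutoff_power_def by (simp, rule powr_mono2') (use assms in auto)

lemma abs_cutoff_power_diff_le:
  assumes "0 < c" "0 < m"
  shows "\<bar>cutoff_power m c a - cutoff_power m c b\<bar> \<le> m * c powr (-m-1) * \<bar>a - b\<bar>"
proof -
  have "\<bar>max a c - max b c\<bar> \<le> \<bar>a - b\<bar>" by (simp add: max_def)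
  then have "m * c powr (-m-1) * \<bar>max a c - max b c\<bar> \<le> m * c powr (-m-1) * \<bar>a - b\<bar>"
    using assms by (intro mult_left_mono) auto
  with abs_powr_neg_diff_le[OF assms, of "max a c" "max b c"] show ?thesis
    unfolding cutoff_power_def by simp
qed

definition cutoff_field :: "real \<Rightarrow> real \<Rightarrow> nat \<Rightarrow> real \<Rightarrow> (nat \<Rightarrow> real) \<Rightarrow> nat \<Rightarrow> real" where
  "cutoff_field m chi N c x i =
     (if i < N then - cutoff_power m c (x (Suc i) - x i) else 0)
   + (if 1 < i then cutoff_power m c (x i - x (i - 1)) else 0)
   + 2 * chi * (\<Sum>j\<in>{1..N} - {i}. sgn (real j - real i) * cutoff_power m c \<bar>x j - x i\<bar>)"

lemma cutoff_field_eq_flow_field: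
  assumes gap: "\<forall>k\<in>{1..<N}. x k + c \<le> x (Suc k)" and "0 \<le> c" and i: "i \<in> {1..N}"
  shows "cutoff_field m chi N c x i = flow_field m chi N x i"
proof -
  have "cutoff_power m c (x (Suc i) - x i) = (x (Suc i) - x i) powr (-m)" if "i < N"
    using gap that i by (intro cutoff_power_eq) force
  moreover have "cutoff_power m c (x i - x (i - 1)) = (x i - x (i - 1)) powr (-m)" if "1 < i"
  proof -
    have "i - 1 \<in> {1..<N}" "Suc (i - 1) = i" using that i by auto
    then have "x (i - 1) + c \<le> x i" using gap by metis
    then show ?thesis by (intro cutoff_power_eq) simp
  qed
  moreover have "cutoff_power m c \<bar>x j - x i\<bar> = \<bar>x j - x i\<bar> powr (-m)" if "j \<in> {1..N} - {i}" for j
    using consecutive_gap_imp_dist[OF gap \<open>0 \<le> c\<close> i, of j] that by (intro cutoff_power_eq) auto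
  ultimately show ?thesis unfolding cutoff_field_def flow_field_def by simp
qed

lemma abs_sum_sgn_mult_le:
  fixes u :: "nat \<Rightarrow> real"
  assumes "\<forall>j\<in>A. \<bar>u j\<bar> \<le> B" and "finite A"
  shows "\<bar>\<Sum>j\<in>A. sgn (r j) * u j\<bar> \<le> real (card A) * B"
proof -
  have "\<bar>\<Sum>j\<in>A. sgn (r j) * u j\<bar> \<le> (\<Sum>j\<in>A. \<bar>sgn (r j) * u j\<bar>)" by (rule sum_abs)
  also have "\<dots> \<le> (\<Sum>j\<in>A. B)"
  proof (rule sum_mono)
    fix j assume "j \<in> A"
    have "\<bar>sgn (r j)\<bar> \<le> 1" by (simp add: abs_sgn_eq)
    then show "\<bar>sgn (r j) * u j\<bar> \<le> B"
      using assms \<open>j \<in> A\<close> by (simp add: abs_mult) (meson abs_ge_zero mult_left_le_one_le order_trans)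
  qed
  finally show ?thesis by simp
qed

lemma abs_cutoff_field_le:
  assumes "0 < c" "0 < m" "0 \<le> chi"
  shows "\<bar>cutoff_field m chi N c x i\<bar> \<le> c powr (-m) * (2 + 2 * chi * N)"
proof -
  define P where "P = c powr (-m)"
  have P: "\<bar>cutoff_power m c d\<bar> \<le> P" for d unfolding P_def by (rule abs_cutoff_power_le[OF assms(1,2)])
  have "\<bar>\<Sum>j\<in>{1..N} - {i}. sgn (real j - real i) * cutoff_power m c \<bar>x j - x i\<bar>\<bar>
      \<le> real (card ({1..N} - {i})) * P"
    by (rule abs_sum_sgn_mult_le) (use P in auto)
  also have "\<dots> \<le> real N * P"
    unfolding P_def by (intro mult_right_mono) (auto simp: card_Diff_singleton_if)
  finally have "\<bar>2 * chi * (\<Sum>j\<in>{1..N} - {i}. sgn (real j - real i) * cutoff_power m c \<bar>x j - x i\<bar>)\<bar>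
      \<le> 2 * chi * (real N * P)"
    using assms(3) by (simp add: abs_mult mult_left_mono)
  moreover have "\<bar>if i < N then - cutoff_power m c (x (Suc i) - x i) else 0\<bar> \<le> P"
    and "\<bar>if 1 < i then cutoff_power m c (x i - x (i - 1)) else 0\<bar> \<le> P"
    using P[of "x (Suc i) - x i"] P[of "x i - x (i - 1)"] P[of 0] by auto
  ultimately have "\<bar>cutoff_field m chi N c x i\<bar> \<le> P + P + 2 * chi * (real N * P)"
    unfolding cutoff_field_def by linarith
  then show ?thesis unfolding P_def by (simp add: algebra_simps)
qed

lemma lipschitz_system_cutoff_field:
  assumes c: "0 < c" and m: "0 < m" and chi: "0 \<le> chi"
  shows "lipschitz_system N (m * c powr (-m-1) * (4 + 4 * chi * N)) (cutoff_field m chi N c)"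
  unfolding lipschitz_system_def
proof (intro conjI allI impI)
  show "0 \<le> m * c powr (-m-1) * (4 + 4 * chi * N)" using m chi by simp
  fix x y :: "nat \<Rightarrow> real" and D i
  assume i: "i \<in> {1..N}" and D: "\<forall>j\<in>{1..N}. \<bar>x j - y j\<bar> \<le> D"
  define K where "K = m * c powr (-m-1)"
  have K0: "0 \<le> K" unfolding K_def using m by simp
  have K: "\<bar>cutoff_power m c a - cutoff_power m c b\<bar> \<le> K * \<bar>a - b\<bar>" for a b
    unfolding K_def by (rule abs_cutoff_power_diff_le[OF c m])
  have D0: "0 \<le> D" using D i by force
  have two: "\<bar>cutoff_power m c (x j - x k) - cutoff_power m c (y j - y k)\<bar> \<le> K * (2 * D)"
    if "j \<in> {1..N}" "k \<in> {1..N}" for j k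
  proof -
    have "\<bar>x j - y j\<bar> \<le> D" "\<bar>x k - y k\<bar> \<le> D" using D that by auto
    then have "\<bar>(x j - x k) - (y j - y k)\<bar> \<le> 2 * D" by linarith
    then show ?thesis using K[of "x j - x k" "y j - y k"] mult_left_mono[OF _ K0] by force
  qed
  have two_abs: "\<bar>cutoff_power m c \<bar>x j - x i\<bar> - cutoff_power m c \<bar>y j - y i\<bar>\<bar> \<le> K * (2 * D)"
    if "j \<in> {1..N}" for j
  proof -
    have "\<bar>x j - y j\<bar> \<le> D" "\<bar>x i - y i\<bar> \<le> D" using D that i by auto
    then have "\<bar>\<bar>x j - x i\<bar> - \<bar>y j - y i\<bar>\<bar> \<le> 2 * D" by linarith
    then show ?thesis using K[of "\<bar>x j - x i\<bar>" "\<bar>y j - y i\<bar>"] mult_left_mono[OF _ K0] by force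
  qed
  have "\<bar>(\<Sum>j\<in>{1..N} - {i}. sgn (real j - real i) * cutoff_power m c \<bar>x j - x i\<bar>)
        - (\<Sum>j\<in>{1..N} - {i}. sgn (real j - real i) * cutoff_power m c \<bar>y j - y i\<bar>)\<bar>
      = \<bar>\<Sum>j\<in>{1..N} - {i}. sgn (real j - real i)
          * (cutoff_power m c \<bar>x j - x i\<bar> - cutoff_power m c \<bar>y j - y i\<bar>)\<bar>"
    by (simp add: sum_subtractf[symmetric] right_diff_distrib)
  also have "\<dots> \<le> real (card ({1..N} - {i})) * (K * (2 * D))"
    by (rule abs_sum_sgn_mult_le) (use two_abs in auto)
  also have "\<dots> \<le> real N * (K * (2 * D))"
    using K0 D0 i by (intro mult_right_mono) (auto simp: card_Diff_singleton_if)
  finally have inter: "\<bar>(\<Sum>j\<in>{1..N} - {i}. sgn (real j - real i) * cutoff_power m c \<bar>x j - x i\<bar>)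
        - (\<Sum>j\<in>{1..N} - {i}. sgn (real j - real i) * cutoff_power m c \<bar>y j - y i\<bar>)\<bar>
      \<le> real N * (K * (2 * D))" .
  have right: "\<bar>(if i < N then - cutoff_power m c (x (Suc i) - x i) else 0)
      - (if i < N then - cutoff_power m c (y (Suc i) - y i) else 0)\<bar> \<le> K * (2 * D)"
    using two[of "Suc i" i] i D0 K0 by (auto simp: abs_minus_commute)
  have left: "\<bar>(if 1 < i then cutoff_power m c (x i - x (i - 1)) else 0)
      - (if 1 < i then cutoff_power m c (y i - y (i - 1)) else 0)\<bar> \<le> K * (2 * D)"
  proof (cases "1 < i")
    case True
    then have "i - 1 \<in> {1..N}" using i by auto
    then show ?thesis using two[OF i] True by simp
  qed (use D0 K0 in simp)
  have "\<bar>2 * chi * ((\<Sum>j\<in>{1..N} - {i}. sgn (real j - real i) * cutoff_power m c \<bar>x j - x i\<bar>)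
        - (\<Sum>j\<in>{1..N} - {i}. sgn (real j - real i) * cutoff_power m c \<bar>y j - y i\<bar>))\<bar>
      \<le> 2 * chi * (real N * (K * (2 * D)))"
    using mult_left_mono[OF inter, of "2 * chi"] chi by (simp add: abs_mult)
  moreover have "cutoff_field m chi N c x i - cutoff_field m chi N c y i =
      ((if i < N then - cutoff_power m c (x (Suc i) - x i) else 0)
        - (if i < N then - cutoff_power m c (y (Suc i) - y i) else 0))
    + ((if 1 < i then cutoff_power m c (x i - x (i - 1)) else 0)
        - (if 1 < i then cutoff_power m c (y i - y (i - 1)) else 0))
    + 2 * chi * ((\<Sum>j\<in>{1..N} - {i}. sgn (real j - real i) * cutoff_power m c \<bar>x j - x i\<bar>)
        - (\<Sum>j\<in>{1..N} - {i}. sgn (real j - real i) * cutoff_power m c \<bar>y j - y i\<bar>))"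
    unfolding cutoff_field_def by (simp add: algebra_simps)
  ultimately have "\<bar>cutoff_field m chi N c x i - cutoff_field m chi N c y i\<bar>
      \<le> K * (2 * D) + K * (2 * D) + 2 * chi * (real N * (K * (2 * D)))"
    using right left by linarith
  then show "\<bar>cutoff_field m chi N c x i - cutoff_field m chi N c y i\<bar>
      \<le> m * c powr (-m-1) * (4 + 4 * chi * N) * D"
    unfolding K_def by (simp add: algebra_simps)
qed

section \<open>The energy\<close>

lemma DERIV_nonpos_within_imp_le:
  fixes f f' :: "real \<Rightarrow> real"
  assumes "a \<le> b"
    and f': "\<And>s. s \<in> {a..b} \<Longrightarrow> (f has_real_derivative f' s) (at s within {a..b})"
    and nonpos: "\<And>s. s \<in> {a..b} \<Longrightarrow> f' s \<le> 0"
  shows "f b \<le> f a"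
proof -
  obtain s where s: "s \<in> {a..b}" and "f b - f a = f' s * (b - a)"
    using mvt_very_simple[OF \<open>a \<le> b\<close>, of f "\<lambda>s. (*) (f' s)"] f'
    by (auto simp: has_field_derivative_def)
  moreover have "f' s * (b - a) \<le> 0" using nonpos[OF s] \<open>a \<le> b\<close> by (simp add: mult_nonpos_nonneg)
  ultimately show ?thesis by linarith
qed

definition gap_sum :: "real \<Rightarrow> nat \<Rightarrow> (nat \<Rightarrow> real) \<Rightarrow> real" where
  "gap_sum m N x = (\<Sum>i\<in>{1..<N}. (x (Suc i) - x i) powr (1 - m))"

definition pair_sum :: "real \<Rightarrow> nat \<Rightarrow> (nat \<Rightarrow> real) \<Rightarrow> real" where
  "pair_sum m N x = (\<Sum>i\<in>{1..N}. \<Sum>j\<in>{1..N} - {i}. \<bar>x j - x i\<bar> powr (1 - m))"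

text \<open>The energy is (m - 1) times the functional F^N_m of which the system is the gradient flow.\<close>

definition energy :: "real \<Rightarrow> real \<Rightarrow> nat \<Rightarrow> (nat \<Rightarrow> real) \<Rightarrow> real" where
  "energy m chi N x = gap_sum m N x - chi * pair_sum m N x"

lemma ratio_C_eq: "ratio_C m N x = pair_sum m N x / gap_sum m N x"
  unfolding ratio_C_def gap_sum_def pair_sum_def ..

text \<open>Discrete integration by parts.\<close>

lemma sum_flow_field_mult:
  "(\<Sum>k=1..N. flow_field m chi N x k * a k) =
     (\<Sum>i\<in>{1..<N}. (x (Suc i) - x i) powr (-m) * (a (Suc i) - a i))
     - chi * (\<Sum>i=1..N. \<Sum>j\<in>{1..N} - {i}.
                sgn (real j - real i) * \<bar>x j - x i\<bar> powr (-m) * (a j - a i))"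
proof -
  define g where "g i = (x (Suc i) - x i) powr (-m)" for i
  define e where "e i j = \<bar>x j - x i\<bar> powr (-m)" for i j
  define s where "s i j = sgn (real j - real i)" for i j :: nat
  have e_sym: "e i j = e j i" for i j unfolding e_def by (simp add: abs_minus_commute)
  have s_anti: "s j i = - s i j" for i j unfolding s_def by (simp add: sgn_minus[symmetric])
  have field: "flow_field m chi N x k = (if k < N then - g k else 0) + (if 1 < k then g (k - 1) else 0)
      + 2 * chi * (\<Sum>j=1..N. s k j * e k j)" for k
  proof -
    have "(\<Sum>j\<in>{1..N} - {k}. s k j * e k j) = (\<Sum>j=1..N. s k j * e k j)"
      by (rule sum.mono_neutral_left) (auto simp: s_def)
    then show ?thesis unfolding flow_field_def g_def e_def s_def by (cases "1 < k") auto
  qed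
  have right: "(\<Sum>k=1..N. (if k < N then - g k else 0) * a k) = - (\<Sum>i\<in>{1..<N}. g i * a i)"
  proof -
    have "(\<Sum>k=1..N. (if k < N then - g k else 0) * a k) = (\<Sum>k\<in>{1..<N}. - (g k * a k))"
      by (rule sum.mono_neutral_cong_right) auto
    then show ?thesis by (simp add: sum_negf)
  qed
  have left: "(\<Sum>k=1..N. (if 1 < k then g (k - 1) else 0) * a k) = (\<Sum>i\<in>{1..<N}. g i * a (Suc i))"
  proof -
    have "Suc ` {1..<N} = {2..N}" by (auto simp: image_Suc_atLeastLessThan)
    then have "(\<Sum>i\<in>{1..<N}. g i * a (Suc i)) = (\<Sum>k=2..N. g (k - 1) * a k)"
      by (metis (no_types, lifting) sum.reindex_cong diff_Suc_1 inj_Suc inj_on_subset subset_UNIV)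
    also have "\<dots> = (\<Sum>k=1..N. (if 1 < k then g (k - 1) else 0) * a k)"
      by (rule sum.mono_neutral_cong_left) auto
    finally show ?thesis ..
  qed
  have swap: "(\<Sum>i=1..N. \<Sum>j=1..N. s i j * e i j * a j) = - (\<Sum>i=1..N. \<Sum>j=1..N. s i j * e i j * a i)"
  proof -
    have "(\<Sum>i=1..N. \<Sum>j=1..N. s i j * e i j * a j) = (\<Sum>j=1..N. \<Sum>i=1..N. s i j * e i j * a j)"
      by (rule sum.swap)
    also have "\<dots> = (\<Sum>j=1..N. \<Sum>i=1..N. - (s j i * e j i * a j))"
      by (intro sum.cong refl) (metis s_anti e_sym mult_minus_left)
    finally show ?thesis by (simp add: sum_negf)
  qed
  have pairs: "(\<Sum>i=1..N. \<Sum>j\<in>{1..N} - {i}. s i j * e i j * (a j - a i))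
      = - 2 * (\<Sum>i=1..N. \<Sum>j=1..N. s i j * e i j * a i)"
  proof -
    have "(\<Sum>i=1..N. \<Sum>j\<in>{1..N} - {i}. s i j * e i j * (a j - a i))
        = (\<Sum>i=1..N. \<Sum>j=1..N. s i j * e i j * (a j - a i))"
      by (intro sum.cong refl sum.mono_neutral_left) (auto simp: s_def)
    also have "\<dots> = (\<Sum>i=1..N. \<Sum>j=1..N. s i j * e i j * a j) - (\<Sum>i=1..N. \<Sum>j=1..N. s i j * e i j * a i)"
      by (simp add: sum_subtractf[symmetric] right_diff_distrib)
    finally show ?thesis using swap by simp
  qed
  have interaction: "(\<Sum>k=1..N. 2 * chi * (\<Sum>j=1..N. s k j * e k j) * a k)
      = 2 * chi * (\<Sum>i=1..N. \<Sum>j=1..N. s i j * e i j * a i)"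
  proof -
    have "(\<Sum>k=1..N. 2 * chi * (\<Sum>j=1..N. s k j * e k j) * a k)
        = (\<Sum>k=1..N. 2 * chi * ((\<Sum>j=1..N. s k j * e k j) * a k))"
      by (simp only: mult.assoc)
    also have "\<dots> = 2 * chi * (\<Sum>k=1..N. (\<Sum>j=1..N. s k j * e k j) * a k)"
      by (rule sum_distrib_left[symmetric])
    also have "\<dots> = 2 * chi * (\<Sum>i=1..N. \<Sum>j=1..N. s i j * e i j * a i)"
      by (simp add: sum_distrib_right)
    finally show ?thesis .
  qed
  have "(\<Sum>k=1..N. flow_field m chi N x k * a k)
      = (\<Sum>k=1..N. (if k < N then - g k else 0) * a k) + (\<Sum>k=1..N. (if 1 < k then g (k - 1) else 0) * a k)
        + (\<Sum>k=1..N. 2 * chi * (\<Sum>j=1..N. s k j * e k j) * a k)"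
    unfolding field by (simp only: distrib_right sum.distrib)
  also have "\<dots> = (\<Sum>i\<in>{1..<N}. g i * (a (Suc i) - a i))
      - chi * (\<Sum>i=1..N. \<Sum>j\<in>{1..N} - {i}. s i j * e i j * (a j - a i))"
    unfolding right left pairs interaction by (simp add: sum_subtractf right_diff_distrib)
  finally show ?thesis unfolding g_def e_def s_def .
qed

lemma sum_flow_field_eq_0: "(\<Sum>k=1..N. flow_field m chi N x k) = 0"
  using sum_flow_field_mult[of m chi N x "\<lambda>_. 1"] by simp

lemma has_real_derivative_abs_powr:
  fixes u p :: real
  assumes "u \<noteq> 0"
  shows "((\<lambda>u. \<bar>u\<bar> powr p) has_real_derivative p * \<bar>u\<bar> powr (p - 1) * sgn u) (at u)"
proof (cases "u > 0")
  case True
  have "((\<lambda>u. u powr p) has_real_derivative p * u powr (p - 1)) (at u)"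
    by (rule has_real_derivative_powr[OF True])
  then have "((\<lambda>u. \<bar>u\<bar> powr p) has_real_derivative p * u powr (p - 1)) (at u)"
    by (rule has_field_derivative_transform_within_open[where S="{0<..}"]) (use True in auto)
  then show ?thesis using True by simp
next
  case False
  then have neg: "u < 0" using assms by simp
  have "((\<lambda>u. (-u) powr p) has_real_derivative p * (-u) powr (p - of_nat 1) * (-1)) (at u)"
    by (rule DERIV_fun_powr) (use neg in \<open>auto intro!: derivative_eq_intros\<close>)
  then have "((\<lambda>u. \<bar>u\<bar> powr p) has_real_derivative p * (-u) powr (p - of_nat 1) * (-1)) (at u)"
    by (rule has_field_derivative_transform_within_open[where S="{..<0}"]) (use neg in auto)
  then show ?thesis using neg by simp
qed

lemma sgn_diff_ordered:
  fixes x :: "nat \<Rightarrow> real"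
  assumes "\<forall>k\<in>{1..<N}. x k < x (Suc k)" and "i \<in> {1..N}" "j \<in> {1..N}"
  shows "sgn (x j - x i) = sgn (real j - real i)"
  using consecutive_less_imp_less[OF assms(1), of i j] consecutive_less_imp_less[OF assms(1), of j i] assms
  by (cases i j rule: linorder_cases) auto

lemma has_real_derivative_energy:
  fixes X :: "real \<Rightarrow> nat \<Rightarrow> real"
  assumes ord: "\<forall>k\<in>{1..<N}. X t k < X t (Suc k)"
    and X': "\<And>i. i \<in> {1..N} \<Longrightarrow> ((\<lambda>s. X s i) has_real_derivative a i) (at t within S)"
  shows "((\<lambda>s. energy m chi N (X s)) has_real_derivative
           (1 - m) * (\<Sum>k=1..N. flow_field m chi N (X t) k * a k)) (at t within S)"
proof -
  have gap': "((\<lambda>s. (X s (Suc i) - X s i) powr (1 - m)) has_real_derivative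
      (1 - m) * ((X t (Suc i) - X t i) powr (-m) * (a (Suc i) - a i))) (at t within S)"
    if i: "i \<in> {1..<N}" for i
  proof -
    have pos: "0 < X t (Suc i) - X t i" using ord i by auto
    from DERIV_chain2[OF has_real_derivative_powr[OF pos, of "1 - m"] DERIV_diff[OF X' X']] i
    show ?thesis by (simp add: mult.assoc)
  qed
  have pair': "((\<lambda>s. \<bar>X s j - X s i\<bar> powr (1 - m)) has_real_derivative
      (1 - m) * (sgn (real j - real i) * \<bar>X t j - X t i\<bar> powr (-m) * (a j - a i))) (at t within S)"
    if i: "i \<in> {1..N}" and j: "j \<in> {1..N} - {i}" for i j
  proof -
    have sgn: "sgn (X t j - X t i) = sgn (real j - real i)"
      using sgn_diff_ordered[OF ord i] j by simp
    then have "X t j - X t i \<noteq> 0" using j by (auto simp: sgn_0_0)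
    from DERIV_chain2[OF has_real_derivative_abs_powr[OF this, of "1 - m"] DERIV_diff[OF X' X']] i j sgn
    show ?thesis by (simp add: mult_ac)
  qed
  have "((\<lambda>s. energy m chi N (X s)) has_real_derivative
      (\<Sum>i\<in>{1..<N}. (1 - m) * ((X t (Suc i) - X t i) powr (-m) * (a (Suc i) - a i)))
      - chi * (\<Sum>i\<in>{1..N}. \<Sum>j\<in>{1..N} - {i}.
          (1 - m) * (sgn (real j - real i) * \<bar>X t j - X t i\<bar> powr (-m) * (a j - a i)))) (at t within S)"
    (is "(_ has_real_derivative ?D) _")
    unfolding energy_def gap_sum_def pair_sum_def by (intro DERIV_diff DERIV_cmult DERIV_sum gap' pair') auto
  moreover have "?D = (1 - m) * (\<Sum>k=1..N. flow_field m chi N (X t) k * a k)"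
    unfolding sum_flow_field_mult
    by (simp add: sum_distrib_left right_diff_distrib mult.assoc mult.left_commute)
  ultimately show ?thesis by simp
qed

lemma energy_le_initial:
  assumes m: "1 < m" and X: "flow_solution m chi N X0 T X" and t: "0 \<le> t" "ereal t < T"
  shows "energy m chi N (X t) \<le> energy m chi N (X 0)"
proof (rule DERIV_nonpos_within_imp_le[OF t(1)])
  have below: "ereal s < T" if "s \<le> t" for s
    using that t(2) by (metis ereal_less_eq(3) le_less_trans)
  fix s assume s: "s \<in> {0..t}"
  then have "0 \<le> s" "ereal s < T" using below by auto
  then have conf: "X s \<in> ordered_conf N"
    and X': "\<And>i. i \<in> {1..N} \<Longrightarrow> ((\<lambda>r. X r i) has_real_derivative flow_field m chi N (X s) i)
              (at s within {r. 0 \<le> r \<and> ereal r < T})"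
    using X unfolding flow_solution_def by auto
  have "{0..t} \<subseteq> {r. 0 \<le> r \<and> ereal r < T}" using below by auto
  with X' have "\<And>i. i \<in> {1..N} \<Longrightarrow> ((\<lambda>r. X r i) has_real_derivative flow_field m chi N (X s) i)
      (at s within {0..t})"
    by (blast intro: DERIV_subset)
  from has_real_derivative_energy[of N X s, OF _ this] conf
  show "((\<lambda>s. energy m chi N (X s)) has_real_derivative
      (1 - m) * (\<Sum>k=1..N. flow_field m chi N (X s) k * flow_field m chi N (X s) k)) (at s within {0..t})"
    unfolding ordered_conf_def by simp
  show "(1 - m) * (\<Sum>k=1..N. flow_field m chi N (X s) k * flow_field m chi N (X s) k) \<le> 0"
    using m by (intro mult_nonpos_nonneg sum_nonneg) auto
qed

lemma gap_powr_le_gap_sum: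
  "k \<in> {1..<N} \<Longrightarrow> (x (Suc k) - x k) powr (1 - m) \<le> gap_sum m N x"
  unfolding gap_sum_def by (rule member_le_sum) auto

lemma gap_sum_pos:
  assumes "x \<in> ordered_conf N" and "2 \<le> N"
  shows "0 < gap_sum m N x"
  unfolding gap_sum_def
proof (rule sum_pos)
  show "{1..<N} \<noteq> {}" using assms(2) by auto
  fix i assume "i \<in> {1..<N}"
  then have "x i < x (Suc i)" using assms(1) by (auto simp: ordered_conf_def)
  then show "0 < (x (Suc i) - x i) powr (1 - m)" by simp
qed simp

text \<open>Every pair distance dominates some consecutive gap, and 1 - m < 0.\<close>

lemma pair_sum_le_gap_sum:
  assumes m: "1 < m" and x: "x \<in> ordered_conf N"
  shows "pair_sum m N x \<le> real N * real N * gap_sum m N x"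
proof -
  have ord: "\<forall>k\<in>{1..<N}. x k < x (Suc k)" using x by (simp add: ordered_conf_def)
  then have mono: "\<forall>k\<in>{1..<N}. x k \<le> x (Suc k)" by force
  have pair_le: "\<bar>x j - x i\<bar> powr (1 - m) \<le> gap_sum m N x"
    if i: "i \<in> {1..N}" and j: "j \<in> {1..N}" and "i < j" for i j
  proof -
    have "x (Suc i) \<le> x j" using consecutive_le_imp_le[OF mono, of "Suc i" j] i j \<open>i < j\<close> by simp
    moreover have "x i < x (Suc i)" using ord i j \<open>i < j\<close> by auto
    ultimately have "\<bar>x j - x i\<bar> powr (1 - m) \<le> (x (Suc i) - x i) powr (1 - m)"
      using m by (intro powr_mono2') auto
    also have "\<dots> \<le> gap_sum m N x" using i j \<open>i < j\<close> by (intro gap_powr_le_gap_sum) auto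
    finally show ?thesis .
  qed
  have term_le: "\<bar>x j - x i\<bar> powr (1 - m) \<le> gap_sum m N x"
    if "i \<in> {1..N}" "j \<in> {1..N} - {i}" for i j
    using pair_le[of i j] pair_le[of j i] that by (cases "i < j") (auto simp: abs_minus_commute)
  have "pair_sum m N x \<le> (\<Sum>i\<in>{1..N}. \<Sum>j\<in>{1..N} - {i}. gap_sum m N x)"
    unfolding pair_sum_def by (intro sum_mono term_le)
  also have "\<dots> \<le> (\<Sum>i\<in>{1..N}. real N * gap_sum m N x)"
  proof (rule sum_mono)
    have "0 \<le> gap_sum m N x" unfolding gap_sum_def by (simp add: sum_nonneg)
    then show "(\<Sum>j\<in>{1..N} - {i}. gap_sum m N x) \<le> real N * gap_sum m N x" for i
      by (auto simp: card_Diff_singleton_if intro!: mult_right_mono)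
  qed
  finally show ?thesis by simp
qed

lemma bdd_above_ratio_C:
  assumes "1 < m" and "2 \<le> N"
  shows "bdd_above (ratio_C m N ` ordered_conf N)"
proof (rule bdd_aboveI2)
  fix x assume x: "x \<in> ordered_conf N"
  show "ratio_C m N x \<le> real N * real N"
    unfolding ratio_C_eq using pair_sum_le_gap_sum[OF assms(1) x] gap_sum_pos[OF x assms(2)]
    by (simp add: divide_le_eq)
qed

lemma energy_ge_gap_sum:
  assumes "1 < m" "2 \<le> N" "0 < chi" "chi < C_const m N" and x: "x \<in> ordered_conf N"
  shows "(1 - chi / C_const m N) * gap_sum m N x \<le> energy m chi N x"
proof -
  define S where "S = (SUP y\<in>ordered_conf N. ratio_C m N y)"
  have "0 < C_const m N" using assms by linarith
  then have S: "S = 1 / C_const m N" unfolding C_const_def S_def by simp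
  have "ratio_C m N x \<le> S" unfolding S_def by (rule cSUP_upper[OF x bdd_above_ratio_C[OF assms(1,2)]])
  then have "pair_sum m N x \<le> S * gap_sum m N x"
    using gap_sum_pos[OF x assms(2)] unfolding ratio_C_eq by (simp add: divide_le_eq)
  then have "chi * pair_sum m N x \<le> chi * (S * gap_sum m N x)" using assms(3) by simp
  then show ?thesis unfolding energy_def S by (simp add: field_simps)
qed

section \<open>Global existence\<close>

lemma flow_solution_ereal_iff:
  "flow_solution m chi N X0 (ereal \<tau>) X \<longleftrightarrow>
     0 < \<tau> \<and> (\<forall>i\<in>{1..N}. X 0 i = X0 i) \<and> (\<forall>t\<in>{0..<\<tau>}. X t \<in> ordered_conf N) \<and>
     solves_system N (flow_field m chi N) {0..<\<tau>} X"
proof -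
  have "{s. 0 \<le> s \<and> ereal s < ereal \<tau>} = {0..<\<tau>}" by auto
  then show ?thesis unfolding flow_solution_def solves_system_def by auto
qed

lemma gap_ge_of_gap_sum_le:
  assumes m: "1 < m" and x: "x \<in> ordered_conf N" and K: "gap_sum m N x \<le> K" and k: "k \<in> {1..<N}"
  shows "x k + K powr (1 / (1 - m)) \<le> x (Suc k)"
proof -
  define u where "u = x (Suc k) - x k"
  have u: "0 < u" using x k unfolding u_def ordered_conf_def by auto
  have "u powr (1 - m) \<le> K" using gap_powr_le_gap_sum[OF k, of x m] K unfolding u_def by linarith
  then have "K powr (1 / (1 - m)) \<le> (u powr (1 - m)) powr (1 / (1 - m))"
    using m u by (intro powr_mono2') auto
  also have "\<dots> = u" using m u by (simp add: powr_powr)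
  finally show ?thesis unfolding u_def by simp
qed

lemma flow_solution_uniform_gap:
  assumes m: "1 < m" and chi: "0 < chi" and N: "2 \<le> N" and C: "chi < C_const m N"
    and X: "flow_solution m chi N X0 T X"
  obtains \<delta> where "0 < \<delta>"
    and "\<And>t k. 0 \<le> t \<Longrightarrow> ereal t < T \<Longrightarrow> k \<in> {1..<N} \<Longrightarrow> X t k + \<delta> \<le> X t (Suc k)"
proof
  have conf: "X t \<in> ordered_conf N" if "0 \<le> t" "ereal t < T" for t
    using X that unfolding flow_solution_def by blast
  define \<kappa> where "\<kappa> = 1 - chi / C_const m N"
  have \<kappa>: "0 < \<kappa>" unfolding \<kappa>_def using chi C by simp
  define K where "K = energy m chi N (X 0) / \<kappa>"
  have gap_sum_le: "gap_sum m N (X t) \<le> K" if "0 \<le> t" "ereal t < T" for t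
  proof -
    have "\<kappa> * gap_sum m N (X t) \<le> energy m chi N (X 0)"
      using energy_ge_gap_sum[OF m N chi C conf[OF that]] energy_le_initial[OF m X that]
      unfolding \<kappa>_def by linarith
    then show ?thesis unfolding K_def using \<kappa> by (simp add: field_simps)
  qed
  have "0 < T" using X unfolding flow_solution_def by simp
  then have "0 < gap_sum m N (X 0)" using gap_sum_pos[OF conf N] by (simp add: zero_ereal_def)
  then have "0 < K" using gap_sum_le[of 0] \<open>0 < T\<close> by (simp add: zero_ereal_def)
  then show "0 < K powr (1 / (1 - m))" by simp
  fix t k assume "0 \<le> t" "ereal t < T" "k \<in> {1..<N}"
  then show "X t k + K powr (1 / (1 - m)) \<le> X t (Suc k)"
    using gap_ge_of_gap_sum_le[OF m conf gap_sum_le] by blast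
qed

lemma solves_system_cong:
  assumes "solves_system N F S x" and "\<forall>t\<in>S. \<forall>i\<in>{1..N}. F (x t) i = G (x t) i"
  shows "solves_system N G S x"
  using assms unfolding solves_system_def by simp

lemma solves_system_drift_le:
  assumes x: "solves_system N F {a..b} x" and B: "\<And>y i. i \<in> {1..N} \<Longrightarrow> \<bar>F y i\<bar> \<le> B"
    and t: "t \<in> {a..b}" and i: "i \<in> {1..N}"
  shows "\<bar>x t i - x a i\<bar> \<le> B * (t - a)"
proof -
  have "norm (x t i - x a i) \<le> B * norm (t - a)"
    by (rule field_differentiable_bound[where S="{a..b}" and f'="\<lambda>s. F (x s) i"])
      (use x B t i in \<open>auto simp: solves_system_def\<close>)
  then show ?thesis using t by simp
qed

lemma flow_solution_sum_const:
  assumes x: "solves_system N (flow_field m chi N) {a..b} x" and t: "t \<in> {a..b}"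
  shows "(\<Sum>i\<in>{1..N}. x t i) = (\<Sum>i\<in>{1..N}. x a i)"
proof -
  have "norm ((\<Sum>i\<in>{1..N}. x t i) - (\<Sum>i\<in>{1..N}. x a i)) \<le> 0 * norm (t - a)"
  proof (rule field_differentiable_bound[of "{a..b}"])
    fix s assume "s \<in> {a..b}"
    with x show "((\<lambda>s. \<Sum>i\<in>{1..N}. x s i) has_field_derivative (\<Sum>i\<in>{1..N}. flow_field m chi N (x s) i))
        (at s within {a..b})"
      unfolding solves_system_def by (intro DERIV_sum) auto
    show "norm (\<Sum>i\<in>{1..N}. flow_field m chi N (x s) i) \<le> 0"
      using sum_flow_field_eq_0 by simp
  qed (use t in auto)
  then show ?thesis by simp
qed

lemma cutoff_solution_keeps_gap:
  assumes x: "solves_system N (cutoff_field m chi N c) {a..a+h} x"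
    and c: "0 < c" and m: "0 < m" and chi: "0 \<le> chi"
    and gap: "\<forall>k\<in>{1..<N}. x a k + 2 * c \<le> x a (Suc k)"
    and small: "2 * (c powr (-m) * (2 + 2 * chi * N)) * h \<le> c"
    and t: "t \<in> {a..a+h}"
  shows "\<forall>k\<in>{1..<N}. x t k + c \<le> x t (Suc k)"
proof
  define B where "B = c powr (-m) * (2 + 2 * chi * N)"
  have drift: "\<bar>x t i - x a i\<bar> \<le> B * h" if "i \<in> {1..N}" for i
  proof -
    have "\<bar>x t i - x a i\<bar> \<le> B * (t - a)"
      using solves_system_drift_le[OF x _ t that] abs_cutoff_field_le[OF c m chi] unfolding B_def by blast
    also have "\<dots> \<le> B * h" using t chi unfolding B_def by (intro mult_left_mono) auto
    finally show ?thesis .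
  qed
  fix k assume "k \<in> {1..<N}"
  then show "x t k + c \<le> x t (Suc k)"
    using gap drift[of k] drift[of "Suc k"] small unfolding B_def by force
qed

lemma flow_solution_glue:
  assumes X: "flow_solution m chi N X0 (ereal \<tau>) X" and ab: "0 \<le> a" "a < \<tau>" "\<tau> < b"
    and W: "solves_system N (flow_field m chi N) {a..b} W"
    and W_conf: "\<forall>t\<in>{a..b}. W t \<in> ordered_conf N"
    and agree: "\<forall>t\<in>{a..<\<tau>}. \<forall>i\<in>{1..N}. W t i = X t i"
  shows "flow_solution m chi N X0 (ereal b) (\<lambda>s. if s < \<tau> then X s else W s)"
    (is "flow_solution _ _ _ _ _ ?Y")
proof -
  have X0: "0 < \<tau>" "\<forall>i\<in>{1..N}. X 0 i = X0 i" and X_conf: "\<forall>t\<in>{0..<\<tau>}. X t \<in> ordered_conf N"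
    and X': "solves_system N (flow_field m chi N) {0..<\<tau>} X"
    using X unfolding flow_solution_ereal_iff by auto
  have "((\<lambda>s. ?Y s i) has_real_derivative flow_field m chi N (?Y t) i) (at t within {0..<b})"
    if t: "t \<in> {0..<b}" and i: "i \<in> {1..N}" for t i
  proof (cases "t < \<tau>")
    case True
    have "((\<lambda>s. X s i) has_real_derivative flow_field m chi N (X t) i) (at t within {0..<\<tau>})"
      using X' True t i unfolding solves_system_def by auto
    moreover have "at t within {0..<\<tau>} = at t within {0..<b}"
      by (rule at_within_nhd[of t "{..<\<tau>}"]) (use True ab t in auto)
    ultimately have "((\<lambda>s. X s i) has_real_derivative flow_field m chi N (X t) i) (at t within {0..<b})"
      by simp
    then have "((\<lambda>s. ?Y s i) has_real_derivative flow_field m chi N (X t) i) (at t within {0..<b})"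
    proof (rule has_field_derivative_transform_within[where d="\<tau> - t"])
      fix s assume "dist s t < \<tau> - t"
      then show "X s i = ?Y s i" by (simp add: dist_real_def abs_less_iff)
    qed (use True t in auto)
    then show ?thesis using True by simp
  next
    case False
    then have ta: "a < t" and tW: "t \<in> {a..b}" using t ab by auto
    have "((\<lambda>s. W s i) has_real_derivative flow_field m chi N (W t) i) (at t within {a..b})"
      using W tW i unfolding solves_system_def by auto
    moreover have "at t within {a..b} = at t within {0..<b}"
      by (rule at_within_nhd[of t "{a<..<b}"]) (use ta t ab in auto)
    ultimately have "((\<lambda>s. W s i) has_real_derivative flow_field m chi N (W t) i) (at t within {0..<b})"
      by simp
    then have "((\<lambda>s. ?Y s i) has_real_derivative flow_field m chi N (W t) i) (at t within {0..<b})"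
    proof (rule has_field_derivative_transform_within[where d="t - a"])
      fix s assume "s \<in> {0..<b}" "dist s t < t - a"
      then have "a < s" by (simp add: dist_real_def abs_less_iff)
      then show "W s i = ?Y s i" using agree i by auto
    qed (use False ta t in auto)
    then show ?thesis using False by simp
  qed
  moreover have "?Y t \<in> ordered_conf N" if "t \<in> {0..<b}" for t
    using that X_conf W_conf ab by auto
  ultimately show ?thesis
    unfolding flow_solution_ereal_iff solves_system_def using X0 ab by auto
qed

lemma exists_small_step:
  fixes A B c :: real
  assumes "0 \<le> A" "0 \<le> B" "0 < c"
  obtains h where "0 < h" "A * h < 1" "B * h \<le> c"
proof
  define h where "h = min (1 / (A + 1)) (c / (B + 1))"
  show "0 < h" unfolding h_def using assms by simp
  have "A * h \<le> A * (1 / (A + 1))" unfolding h_def using assms by (intro mult_left_mono) auto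
  also have "\<dots> < 1" using assms by (simp add: field_simps)
  finally show "A * h < 1" .
  have "B * h \<le> B * (c / (B + 1))" unfolding h_def using assms by (intro mult_left_mono) auto
  also have "\<dots> \<le> c" using assms by (simp add: field_simps)
  finally show "B * h \<le> c" .
qed

lemma flow_solution_extends:
  assumes m: "0 < m" and chi: "0 \<le> chi" and X: "flow_solution m chi N X0 (ereal \<tau>) X"
    and \<delta>: "0 < \<delta>" and gap: "\<forall>t\<in>{0..<\<tau>}. \<forall>k\<in>{1..<N}. X t k + \<delta> \<le> X t (Suc k)"
  obtains b Y where "\<tau> < b" "flow_solution m chi N X0 (ereal b) Y"
    "\<forall>t\<in>{0..<\<tau>}. \<forall>i\<in>{1..N}. Y t i = X t i"
proof -
  have X_conf: "\<forall>t\<in>{0..<\<tau>}. X t \<in> ordered_conf N"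
    and X': "solves_system N (flow_field m chi N) {0..<\<tau>} X" and "0 < \<tau>"
    using X unfolding flow_solution_ereal_iff by auto
  define c where "c = \<delta> / 2"
  define L where "L = m * c powr (-m-1) * (4 + 4 * chi * N)"
  define B where "B = c powr (-m) * (2 + 2 * chi * N)"
  have c: "0 < c" unfolding c_def using \<delta> by simp
  have F: "lipschitz_system N L (cutoff_field m chi N c)"
    unfolding L_def by (rule lipschitz_system_cutoff_field[OF c m chi])
  have NL: "0 \<le> real N * L" and B: "0 \<le> 2 * B"
    using F chi unfolding lipschitz_system_def B_def by auto
  obtain h where h: "0 < h" "real N * L * h < 1" "2 * B * h \<le> c"
    by (rule exists_small_step[OF NL B c])
  define a where "a = max 0 (\<tau> - h / 2)"
  have a: "0 \<le> a" "a < \<tau>" "\<tau> < a + h" unfolding a_def using h \<open>0 < \<tau>\<close> by auto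
  obtain W where W0: "\<forall>i\<in>{1..N}. W a i = X a i"
    and W: "solves_system N (cutoff_field m chi N c) {a..a+h} W"
    using lipschitz_system_local_existence[OF F h(1,2)] by blast
  have gap_c: "X t k + 2 * c \<le> X t (Suc k)" if "t \<in> {0..<\<tau>}" "k \<in> {1..<N}" for t k
    using gap that unfolding c_def by simp
  have "\<forall>k\<in>{1..<N}. W a k + 2 * c \<le> W a (Suc k)"
  proof
    fix k assume k: "k \<in> {1..<N}"
    then have "k \<in> {1..N}" "Suc k \<in> {1..N}" by auto
    then show "W a k + 2 * c \<le> W a (Suc k)" using gap_c[OF _ k] a W0 by simp
  qed
  then have W_gap: "\<forall>k\<in>{1..<N}. W t k + c \<le> W t (Suc k)" if "t \<in> {a..a+h}" for t
    using cutoff_solution_keeps_gap[OF W c m chi _ _ that] h(3) unfolding B_def by blast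
  have W_flow: "solves_system N (flow_field m chi N) {a..a+h} W"
  proof (rule solves_system_cong[OF W])
    show "\<forall>t\<in>{a..a+h}. \<forall>i\<in>{1..N}. cutoff_field m chi N c (W t) i = flow_field m chi N (W t) i"
      using W_gap cutoff_field_eq_flow_field c by (simp add: less_imp_le)
  qed
  have W_conf: "\<forall>t\<in>{a..a+h}. W t \<in> ordered_conf N"
  proof
    fix t assume t: "t \<in> {a..a+h}"
    have "(\<Sum>i\<in>{1..N}. W t i) = (\<Sum>i\<in>{1..N}. X a i)"
      using flow_solution_sum_const[OF W_flow t] W0 by simp
    also have "\<dots> = 0" using X_conf a by (simp add: ordered_conf_def)
    moreover have "\<forall>k\<in>{1..<N}. W t k < W t (Suc k)"
      using W_gap[OF t] c by (meson less_add_same_cancel1 less_le_trans)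
    ultimately show "W t \<in> ordered_conf N" unfolding ordered_conf_def by simp
  qed
  have agree: "\<forall>t\<in>{a..<\<tau>}. \<forall>i\<in>{1..N}. W t i = X t i"
  proof (intro ballI)
    fix t i assume t: "t \<in> {a..<\<tau>}" and i: "i \<in> {1..N}"
    have "solves_system N (flow_field m chi N) {a..t} X"
      by (rule solves_system_subset[OF X']) (use a t in auto)
    moreover have "\<forall>s\<in>{a..t}. \<forall>k\<in>{1..N}. flow_field m chi N (X s) k = cutoff_field m chi N c (X s) k"
    proof (intro ballI)
      fix s k assume s: "s \<in> {a..t}" and k: "k \<in> {1..N}"
      have "s \<in> {0..<\<tau>}" using s a t by auto
      have "\<forall>j\<in>{1..<N}. X s j + c \<le> X s (Suc j)"
      proof
        fix j assume "j \<in> {1..<N}"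
        from gap_c[OF \<open>s \<in> {0..<\<tau>}\<close> this] c show "X s j + c \<le> X s (Suc j)" by linarith
      qed
      then show "flow_field m chi N (X s) k = cutoff_field m chi N c (X s) k"
        using cutoff_field_eq_flow_field[OF _ _ k] c by simp
    qed
    ultimately have X_cut: "solves_system N (cutoff_field m chi N c) {a..t} X"
      by (rule solves_system_cong)
    have W_cut: "solves_system N (cutoff_field m chi N c) {a..t} W"
      by (rule solves_system_subset[OF W]) (use a t in auto)
    have "real N * L * (t - a) \<le> real N * L * h"
      using t a NL by (intro mult_left_mono) auto
    then have small: "real N * L * (t - a) < 1" using h(2) by linarith
    have "\<forall>j\<in>{1..N}. W a j = X a j" by (rule W0)
    moreover have "t \<in> {a..t}" using t by simp
    ultimately show "W t i = X t i"
      by (rule lipschitz_system_unique[OF F small W_cut X_cut _ _ i])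
  qed
  show thesis
  proof (rule that)
    show "flow_solution m chi N X0 (ereal (a + h)) (\<lambda>s. if s < \<tau> then X s else W s)"
      by (rule flow_solution_glue[OF X a W_flow W_conf agree])
  qed (use a in auto)
qed

theorem theorem1p3:
  fixes m chi :: real and N :: nat and X0 :: "nat \<Rightarrow> real"
    and T :: ereal and X :: "real \<Rightarrow> nat \<Rightarrow> real"
  assumes "m > 1" and "chi > 0" and "N \<ge> 2"
    and "chi < C_const m N"
    and "X0 \<in> ordered_conf N"
    and "maximal_flow_solution m chi N X0 T X"
  shows "T = \<infinity>"
proof (rule ccontr)
  assume "T \<noteq> \<infinity>"
  have X: "flow_solution m chi N X0 T X"
    and maximal: "\<not> (\<exists>T' Y. T < T' \<and> flow_solution m chi N X0 T' Y \<and>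
        (\<forall>t. 0 \<le> t \<and> ereal t < T \<longrightarrow> (\<forall>i\<in>{1..N}. Y t i = X t i)))"
    using assms(6) unfolding maximal_flow_solution_def by auto
  have "0 < T" using X unfolding flow_solution_def by simp
  with \<open>T \<noteq> \<infinity>\<close> obtain \<tau> where \<tau>: "T = ereal \<tau>" by (cases T) auto
  obtain \<delta> where "0 < \<delta>" and gap: "\<And>t k. 0 \<le> t \<Longrightarrow> ereal t < T \<Longrightarrow> k \<in> {1..<N} \<Longrightarrow>
      X t k + \<delta> \<le> X t (Suc k)"
    using flow_solution_uniform_gap[OF assms(1-4) X] by blast
  then have "\<forall>t\<in>{0..<\<tau>}. \<forall>k\<in>{1..<N}. X t k + \<delta> \<le> X t (Suc k)" by (simp add: \<tau>)
  moreover have "0 < m" "0 \<le> chi" using assms(1,2) by simp_all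
  ultimately obtain b Y where "\<tau> < b" "flow_solution m chi N X0 (ereal b) Y"
    "\<forall>t\<in>{0..<\<tau>}. \<forall>i\<in>{1..N}. Y t i = X t i"
    using flow_solution_extends[of m chi N X0 \<tau> X \<delta>] X \<open>0 < \<delta>\<close> unfolding \<tau> by blast
  then have "T < ereal b \<and> flow_solution m chi N X0 (ereal b) Y \<and>
      (\<forall>t. 0 \<le> t \<and> ereal t < T \<longrightarrow> (\<forall>i\<in>{1..N}. Y t i = X t i))"
    by (simp add: \<tau>)
  with maximal show False by blast
qed

end
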